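(* Let $V$ be a finite totally ordered set and let $w$ be a derangement of $V$ (a fixed-point-free permutation of $V$). Then: (a) For distinct $t, t' \in U(w)$, the sets $E_{w,t}$ and $E_{w,t'}$ are disjoint. (b) If $s \in V$ is minimal (with respect to the order on $V$) in its $w$-cycle, then $E_{w,w(s)} \subseteq E_{w,s}$.
   Context: For a permutation $w$ of a finite totally ordered set $V$ and $t \in V$, define $\rho_w(t) = \{t, w(t), \ldots, w^{k-1}(t)\}$, where $k$ is the smallest positive integer with $w^k(t) \le t$, and define $\lambda_w(t) = w^{-\ell}(t)$, where $\ell$ is the smallest positive integer with $w^{-\ell}(t) \le t$. Define $E_{w,t} = \{\{\lambda_w(t), s\} : s \in \rho_w(t)\}$ (a set of 2-element subsets of $V$, i.e. potential edges of a graph on $V$). Let $U(w)$ denote the set of elements of $V$ that are not the minimal element of their $w$-cycle. *)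

theory Defs
  imports "HOL-Combinatorics.Permutations"
begin

definition rho :: "('a::linorder \<Rightarrow> 'a) \<Rightarrow> 'a \<Rightarrow> 'a set" where
  "rho w t = {(w ^^ i) t | i. i < (LEAST k. 0 < k \<and> (w ^^ k) t \<le> t)}"

definition lam :: "('a::linorder \<Rightarrow> 'a) \<Rightarrow> 'a \<Rightarrow> 'a" where
  "lam w t = (inv w ^^ (LEAST l. 0 < l \<and> (inv w ^^ l) t \<le> t)) t"

definition Eset :: "('a::linorder \<Rightarrow> 'a) \<Rightarrow> 'a \<Rightarrow> 'a set set" where
  "Eset w t = {{lam w t, s} | s. s \<in> rho w t}"

text \<open>Elements of V that are not the minimal element of their w-cycle.\<close>
definition Uset :: "'a::linorder set \<Rightarrow> ('a \<Rightarrow> 'a) \<Rightarrow> 'a set" where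
  "Uset V w = {t \<in> V. \<exists>n. (w ^^ n) t < t}"

end

theory Submission
  imports Defs "HOL-Combinatorics.Cycles"
begin

text \<open>
  Along the cycle, \<open>\<rho>\<^sub>w(t)\<close> is the run of elements \<open>\<ge> t\<close>
  starting at \<open>t\<close>, and \<open>\<lambda>\<^sub>w(t)\<close> is the last element before \<open>t\<close> that is \<open>\<le> t\<close>.
  If \<open>t\<close> is not the minimum of its cycle then \<open>\<lambda>\<^sub>w(t) < t\<close>, so \<open>\<lambda>\<^sub>w(t)\<close> is the smaller
  end of every edge in \<open>E\<^sub>w\<^sub>,\<^sub>t\<close>. A shared edge of \<open>E\<^sub>w\<^sub>,\<^sub>t\<close> and \<open>E\<^sub>w\<^sub>,\<^sub>t\<^sub>'\<close> would force
  \<open>\<lambda>\<^sub>w(t) = \<lambda>\<^sub>w(t')\<close> and make \<open>t\<close> lie strictly inside the run \<open>\<rho>\<^sub>w(t')\<close> (or vice versa);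
  but then walking back from \<open>t\<close> one meets an element \<open>\<le> t\<close> no earlier than \<open>t'\<close>,
  so \<open>\<lambda>\<^sub>w(t) \<ge> t' > \<lambda>\<^sub>w(t')\<close>. For the cycle minimum \<open>s\<close>, both \<open>\<lambda>\<^sub>w(s)\<close> and \<open>\<lambda>\<^sub>w(w(s))\<close>
  equal \<open>s\<close>, and \<open>\<rho>\<^sub>w(s)\<close> is the whole cycle.
\<close>

definition first_descent :: "('a::linorder \<Rightarrow> 'a) \<Rightarrow> 'a \<Rightarrow> nat" where
  "first_descent f t = (LEAST k. 0 < k \<and> (f ^^ k) t \<le> t)"

lemma rho_first_descent: "rho w t = {(w ^^ i) t | i. i < first_descent w t}"
  by (simp add: rho_def first_descent_def)

lemma lam_first_descent: "lam w t = (inv w ^^ first_descent (inv w) t) t"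
  by (simp add: lam_def first_descent_def)

lemma Eset_eq_image: "Eset w t = (\<lambda>s. {lam w t, s}) ` rho w t"
  by (auto simp: Eset_def)

lemma first_descent_le:
  assumes "0 < k" and "(f ^^ k) t \<le> t"
  shows "0 < first_descent f t" and "(f ^^ first_descent f t) t \<le> t"
    and "first_descent f t \<le> k"
  using LeastI[of "\<lambda>k. 0 < k \<and> (f ^^ k) t \<le> t" k] Least_le[of _ k] assms
  by (simp_all add: first_descent_def)

lemma first_descent_of_periodic:
  assumes "(f ^^ m) t = t" and "0 < m"
  shows "0 < first_descent f t" and "(f ^^ first_descent f t) t \<le> t"
  using first_descent_le[of m f t] assms by simp_all

lemma less_funpow_before_first_descent:
  assumes "0 < i" and "i < first_descent f t"
  shows "t < (f ^^ i) t"
  using not_less_Least[of i "\<lambda>k. 0 < k \<and> (f ^^ k) t \<le> t"] assms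
  by (auto simp: first_descent_def)

lemma le_funpow_before_first_descent:
  assumes "i < first_descent f t"
  shows "t \<le> (f ^^ i) t"
  using less_funpow_before_first_descent[OF _ assms] by (cases "i = 0") auto

lemma first_descent_eq_1:
  assumes "f t \<le> t"
  shows "first_descent f t = 1"
  unfolding first_descent_def by (rule Least_equality) (use assms in auto)

text \<open>If the first descent returned to \<open>t\<close> itself, the orbit of \<open>t\<close> would have that
  period and no iterate of \<open>t\<close> could lie below \<open>t\<close>.\<close>
lemma funpow_first_descent_less:
  assumes "(f ^^ m) t = t" and "0 < m" and "(f ^^ n) t < t"
  shows "(f ^^ first_descent f t) t < t"
proof -
  let ?K = "first_descent f t"
  have K: "0 < ?K" "(f ^^ ?K) t \<le> t"
    using first_descent_of_periodic[OF assms(1,2)] by auto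
  have "(f ^^ ?K) t \<noteq> t"
  proof
    assume "(f ^^ ?K) t = t"
    then have "(f ^^ (n mod ?K)) t < t"
      using funpow_mod_eq[where f=f and n="?K" and x=t and m=n] assms(3) by simp
    moreover have "n mod ?K < ?K"
      using K by simp
    ultimately show False
      using le_funpow_before_first_descent[of "n mod ?K" f t] by simp
  qed
  with K show ?thesis by simp
qed

lemma funpow_first_descent_of_min:
  assumes "(f ^^ m) t = t" and "0 < m" and "\<forall>n. t \<le> (f ^^ n) t"
  shows "(f ^^ first_descent f t) t = t"
  using first_descent_of_periodic[OF assms(1,2)] assms(3) by (meson order_antisym)

lemma inv_eq_funpow_pred:
  assumes "bij f" and "f ^^ m = id" and "0 < m"
  shows "inv f = f ^^ (m - 1)"
proof (rule inv_unique_comp)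
  have m: "m = Suc (m - 1)" using assms(3) by simp
  show "f \<circ> f ^^ (m - 1) = id"
    using assms(2) m by (metis funpow.simps(2))
  show "f ^^ (m - 1) \<circ> f = id"
    using assms(2) m by (metis funpow_Suc_right)
qed

lemma funpow_eq_inv_funpow:
  assumes "bij f" and "f ^^ m = id" and "0 < m"
  shows "f ^^ n = inv f ^^ ((m - 1) * n)"
proof -
  have "inv f ^^ m = id"
    using inv_fn[OF assms(1), of m] assms(2) by simp
  then have "f = inv f ^^ (m - 1)"
    using inv_eq_funpow_pred[OF bij_imp_bij_inv[OF assms(1)] _ assms(3)] inv_inv_eq[OF assms(1)]
    by simp
  then show ?thesis
    by (metis funpow_mult)
qed

lemma lam_less_of_descent:
  assumes "permutation w" and "(w ^^ n) t < t"
  shows "lam w t < t"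
proof -
  obtain m where m: "w ^^ m = id" "0 < m"
    using permutation_is_nilpotent[OF assms(1)] by blast
  have bij: "bij w"
    using assms(1) by (simp add: permutation_bijective)
  have "inv w ^^ m = id"
    using inv_fn[OF bij, of m] m(1) by simp
  moreover have "(inv w ^^ ((m - 1) * n)) t < t"
    using funpow_eq_inv_funpow[OF bij m] assms(2) by metis
  ultimately show ?thesis
    unfolding lam_first_descent using funpow_first_descent_less m(2) by (metis id_apply)
qed

lemma lam_cycle_min:
  assumes "permutation w" and "\<forall>n. s \<le> (w ^^ n) s"
  shows "lam w s = s"
proof -
  obtain m where m: "w ^^ m = id" "0 < m"
    using permutation_is_nilpotent[OF assms(1)] by blast
  have inv_pow: "inv w ^^ n = w ^^ ((m - 1) * n)" for n
    using inv_eq_funpow_pred[OF permutation_bijective[OF assms(1)] m] by (metis funpow_mult)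
  have "\<forall>n. s \<le> (inv w ^^ n) s"
    using assms(2) by (simp add: inv_pow)
  moreover have "(inv w ^^ m) s = s"
    using inv_fn[OF permutation_bijective[OF assms(1)], of m] m(1) by simp
  ultimately show ?thesis
    unfolding lam_first_descent using funpow_first_descent_of_min m(2) by blast
qed

lemma lam_ge_within_run:
  assumes "bij w" and "0 < d" and "d < first_descent w t"
  shows "t \<le> lam w ((w ^^ d) t)"
proof -
  let ?u = "(w ^^ d) t"
  let ?L = "first_descent (inv w) ?u"
  have cancel: "(inv w ^^ k) ((w ^^ k) x) = x" for k x
    using fun_cong[OF inv_fn_o_fn_is_id[OF assms(1), of k], of x] by simp
  have "(inv w ^^ d) ?u \<le> ?u"
    using cancel less_funpow_before_first_descent[OF assms(2,3)] by simp
  then have L: "0 < ?L" "?L \<le> d"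
    using first_descent_le[of d "inv w" ?u] assms(2) by simp_all
  have "(w ^^ (?L + (d - ?L))) t = (w ^^ ?L) ((w ^^ (d - ?L)) t)"
    by (simp add: funpow_add)
  then have "?u = (w ^^ ?L) ((w ^^ (d - ?L)) t)"
    using L(2) by simp
  then have "lam w ?u = (inv w ^^ ?L) ((w ^^ ?L) ((w ^^ (d - ?L)) t))"
    unfolding lam_first_descent by (rule arg_cong)
  also have "\<dots> = (w ^^ (d - ?L)) t"
    by (rule cancel)
  finally have "lam w ?u = (w ^^ (d - ?L)) t" .
  moreover have "d - ?L < first_descent w t"
    using L assms(3) by simp
  ultimately show ?thesis
    using le_funpow_before_first_descent by simp
qed

text \<open>If \<open>t\<close> is met again strictly inside the run \<open>\<rho>\<^sub>w(t')\<close>, the element \<open>t'\<close> of that run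
  blocks the walk back from \<open>t\<close>.\<close>
lemma lam_ne_of_run_overlap:
  assumes "bij w" and "lam w t' < t'" and "i < j" and "j < first_descent w t'"
    and "(w ^^ i) t = (w ^^ j) t'"
  shows "lam w t \<noteq> lam w t'"
proof -
  have "(w ^^ (i + (j - i))) t' = (w ^^ i) ((w ^^ (j - i)) t')"
    by (simp add: funpow_add)
  then have "(w ^^ i) t = (w ^^ i) ((w ^^ (j - i)) t')"
    using assms(3,5) by simp
  then have "t = (w ^^ (j - i)) t'"
    using inj_fn[OF bij_is_inj[OF assms(1)]] by (meson injD)
  then have "t' \<le> lam w t"
    using lam_ge_within_run[OF assms(1)] assms(3,4) by simp
  with assms(2) show ?thesis by auto
qed

lemma Eset_disjoint:
  assumes "bij w" and "lam w t < t" and "lam w t' < t'" and "t \<noteq> t'"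
  shows "Eset w t \<inter> Eset w t' = {}"
proof (rule ccontr)
  assume "Eset w t \<inter> Eset w t' \<noteq> {}"
  then obtain i j where i: "i < first_descent w t" and j: "j < first_descent w t'"
    and edge: "{lam w t, (w ^^ i) t} = {lam w t', (w ^^ j) t'}"
    unfolding Eset_def rho_first_descent by blast
  have "lam w t < (w ^^ i) t" and "lam w t' < (w ^^ j) t'"
    using le_funpow_before_first_descent[OF i] le_funpow_before_first_descent[OF j] assms(2,3)
    by auto
  with edge have lam: "lam w t = lam w t'" and run: "(w ^^ i) t = (w ^^ j) t'"
    by (auto simp: doubleton_eq_iff)
  consider "i < j" | "j < i" | "i = j" by linarith
  then show False
  proof cases
    case 1
    show False using lam_ne_of_run_overlap[OF assms(1,3) 1 j run] lam by simp
  next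
    case 2
    show False using lam_ne_of_run_overlap[OF assms(1,2) 2 i run[symmetric]] lam by simp
  next
    case 3
    show False using run assms(4) injD[OF inj_fn[OF bij_is_inj[OF assms(1)]]] 3 by blast
  qed
qed

lemma rho_cycle_min:
  assumes "permutation w" and "\<forall>n. s \<le> (w ^^ n) s"
  shows "rho w s = range (\<lambda>n. (w ^^ n) s)"
proof -
  obtain m where m: "w ^^ m = id" "0 < m"
    using permutation_is_nilpotent[OF assms(1)] by blast
  let ?K = "first_descent w s"
  have K: "(w ^^ ?K) s = s" "0 < ?K"
    using funpow_first_descent_of_min[where f=w and m=m and t=s]
      first_descent_of_periodic[where f=w and m=m and t=s] m assms(2)
    by auto
  have "(w ^^ n) s = (w ^^ (n mod ?K)) s" and "n mod ?K < ?K" for n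
    using funpow_mod_eq[where f=w and n="?K" and x=s and m=n] K by simp_all
  then have "(w ^^ n) s \<in> rho w s" for n
    unfolding rho_first_descent by blast
  then show ?thesis
    unfolding rho_first_descent by blast
qed

lemma lam_apply_of_le:
  assumes "inj w" and "s \<le> w s"
  shows "lam w (w s) = s"
  using assms unfolding lam_first_descent by (simp add: first_descent_eq_1)

lemma Eset_apply_subset_cycle_min:
  assumes "permutation w" and "\<forall>n. s \<le> (w ^^ n) s"
  shows "Eset w (w s) \<subseteq> Eset w s"
proof -
  have "s \<le> w s"
    using assms(2)[rule_format, of 1] by simp
  then have "lam w (w s) = lam w s"
    using lam_apply_of_le[OF bij_is_inj[OF permutation_bijective[OF assms(1)]]]
      lam_cycle_min[OF assms] by simp
  moreover have "rho w (w s) \<subseteq> rho w s"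
  proof -
    have "(w ^^ i) (w s) = (w ^^ Suc i) s" for i
      by (simp add: funpow_Suc_right del: funpow.simps)
    then show ?thesis
      unfolding rho_cycle_min[OF assms] unfolding rho_first_descent by blast
  qed
  ultimately show ?thesis
    unfolding Eset_eq_image by (simp add: image_mono)
qed

theorem lemma3p4:
  fixes V :: "'a::linorder set" and w :: "'a \<Rightarrow> 'a"
  assumes "finite V" and "w permutes V" and "\<forall>x\<in>V. w x \<noteq> x"
  shows "(\<forall>t\<in>Uset V w. \<forall>t'\<in>Uset V w. t \<noteq> t' \<longrightarrow> Eset w t \<inter> Eset w t' = {})
    \<and> (\<forall>s\<in>V. (\<forall>n. s \<le> (w ^^ n) s) \<longrightarrow> Eset w (w s) \<subseteq> Eset w s)"
proof -
  have perm: "permutation w"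
    using assms(1,2) permutation_permutes by blast
  have "Eset w t \<inter> Eset w t' = {}" if "t \<in> Uset V w" "t' \<in> Uset V w" "t \<noteq> t'" for t t'
  proof -
    have "lam w t < t" and "lam w t' < t'"
      using that(1,2) lam_less_of_descent[OF perm] unfolding Uset_def by blast+
    then show ?thesis
      using Eset_disjoint[OF permutation_bijective[OF perm] _ _ that(3)] by blast
  qed
  moreover have "Eset w (w s) \<subseteq> Eset w s" if "\<forall>n. s \<le> (w ^^ n) s" for s
    using Eset_apply_subset_cycle_min[OF perm that] .
  ultimately show ?thesis
    by blast
qed

end
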